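(* Let $L$ be a $c$-lattice and $S$ a multiplicatively closed subset of $L$ (with $1\in S$, $0\notin S$). If $p\in L$ is an $S$-prime element, then its $S$-saturation $p_S$ is a prime element of $L$.
   Context: A multiplicative lattice is a complete lattice with a commutative, associative multiplication distributing over arbitrary joins, with $1$ as identity; $L_*$ is the set of compact elements. A $c$-lattice is a compactly generated multiplicative lattice with $1$ compact in which the product of two compact elements is compact. A multiplicatively closed subset is a nonempty $S\subseteq L_*$ closed under multiplication. The $S$-saturation of $a$ is $a_S=\bigvee\{x\in L\mid sx\le a\text{ for some }s\in S\}$. An element $p\ne1$ is prime if $ab\le p$ implies $a\le p$ or $b\le p$. A proper element $p$ with $t\not\le p$ for all $t\in S$ is $S$-prime if there exists $s\in S$ such that for all $a,b\in L$, $ab\le p$ implies $sa\le p$ or $sb\le p$. *)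

theory Defs
  imports Main
begin

definition mult_lattice :: "('a::complete_lattice \<Rightarrow> 'a \<Rightarrow> 'a) \<Rightarrow> bool" where
  "mult_lattice m \<longleftrightarrow>
     (\<forall>a b c. m (m a b) c = m a (m b c)) \<and>
     (\<forall>a b. m a b = m b a) \<and>
     (\<forall>a. m a top = a) \<and>
     (\<forall>a B. m a (Sup B) = Sup (m a ` B))"

definition compact_el :: "'a::complete_lattice \<Rightarrow> bool" where
  "compact_el x \<longleftrightarrow> (\<forall>B. x \<le> Sup B \<longrightarrow> (\<exists>F. F \<subseteq> B \<and> finite F \<and> x \<le> Sup F))"

definition compactly_generated :: "'a::complete_lattice itself \<Rightarrow> bool" where
  "compactly_generated _ \<longleftrightarrow> (\<forall>x::'a. x = Sup {c. compact_el c \<and> c \<le> x})"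

definition c_lattice :: "('a::complete_lattice \<Rightarrow> 'a \<Rightarrow> 'a) \<Rightarrow> bool" where
  "c_lattice m \<longleftrightarrow> mult_lattice m \<and> compactly_generated TYPE('a) \<and> compact_el (top::'a) \<and>
     (\<forall>a b. compact_el a \<and> compact_el b \<longrightarrow> compact_el (m a b))"

definition mult_closed :: "('a::complete_lattice \<Rightarrow> 'a \<Rightarrow> 'a) \<Rightarrow> 'a set \<Rightarrow> bool" where
  "mult_closed m S \<longleftrightarrow> S \<noteq> {} \<and> (\<forall>s\<in>S. compact_el s) \<and> (\<forall>s\<in>S. \<forall>t\<in>S. m s t \<in> S)"

definition saturation :: "('a::complete_lattice \<Rightarrow> 'a \<Rightarrow> 'a) \<Rightarrow> 'a set \<Rightarrow> 'a \<Rightarrow> 'a" where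
  "saturation m S a = Sup {x. \<exists>s\<in>S. m s x \<le> a}"

definition prime_el :: "('a::complete_lattice \<Rightarrow> 'a \<Rightarrow> 'a) \<Rightarrow> 'a \<Rightarrow> bool" where
  "prime_el m p \<longleftrightarrow> p \<noteq> top \<and> (\<forall>a b. m a b \<le> p \<longrightarrow> a \<le> p \<or> b \<le> p)"

definition S_prime :: "('a::complete_lattice \<Rightarrow> 'a \<Rightarrow> 'a) \<Rightarrow> 'a set \<Rightarrow> 'a \<Rightarrow> bool" where
  "S_prime m S p \<longleftrightarrow> p \<noteq> top \<and> (\<forall>t\<in>S. \<not> t \<le> p) \<and>
     (\<exists>s\<in>S. \<forall>a b. m a b \<le> p \<longrightarrow> m s a \<le> p \<or> m s b \<le> p)"

end

theory Submission
  imports Defs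
begin

text \<open>For compact \<open>c\<close> we have \<open>c \<le> p\<^sub>S\<close> iff \<open>s c \<le> p\<close> for some \<open>s \<in> S\<close>: compactness puts \<open>c\<close>
  below a finite join of elements each annihilated into \<open>p\<close> by a member of \<open>S\<close>, and the product
  of these members annihilates the whole join. Hence \<open>p\<^sub>S \<noteq> 1\<close>, as \<open>1\<close> is compact and no member of
  \<open>S\<close> lies below \<open>p\<close>. If \<open>a b \<le> p\<^sub>S\<close> but neither \<open>a\<close> nor \<open>b\<close> is, compact generation yields compact
  \<open>x \<le> a\<close>, \<open>y \<le> b\<close> not below \<open>p\<^sub>S\<close>; since \<open>x y\<close> is compact, \<open>u x y \<le> p\<close> for some \<open>u \<in> S\<close>, and the
  \<open>S\<close>-primality of \<open>p\<close> with witness \<open>s\<close> gives \<open>s u x \<le> p\<close> or \<open>s y \<le> p\<close>, putting \<open>x\<close> or \<open>y\<close>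
  below \<open>p\<^sub>S\<close>.\<close>

lemma mult_lattice_assoc:
  assumes "mult_lattice m"
  shows "m (m a b) c = m a (m b c)"
  using assms unfolding mult_lattice_def by blast

lemma mult_lattice_commute:
  assumes "mult_lattice m"
  shows "m a b = m b a"
  using assms unfolding mult_lattice_def by blast

lemma mult_lattice_top_right:
  assumes "mult_lattice m"
  shows "m a top = a"
  using assms unfolding mult_lattice_def by blast

lemma mult_lattice_Sup_right:
  assumes "mult_lattice m"
  shows "m a (Sup B) = Sup (m a ` B)"
  using assms unfolding mult_lattice_def by blast

lemma mult_lattice_sup:
  assumes "mult_lattice m"
  shows "m a (sup x y) = sup (m a x) (m a y)"
  using mult_lattice_Sup_right[OF assms, of a "{x, y}"] by simp

lemma mult_lattice_bot:
  assumes "mult_lattice m"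
  shows "m a bot = bot"
  using mult_lattice_Sup_right[OF assms, of a "{}"] by simp

lemma mult_lattice_mono_right:
  assumes "mult_lattice m" and "x \<le> y"
  shows "m a x \<le> m a y"
proof -
  have "m a y = sup (m a x) (m a y)"
    using assms(2) mult_lattice_sup[OF assms(1), of a x y] by (simp add: sup.absorb2)
  then show ?thesis by (metis sup.cobounded1)
qed

lemma mult_lattice_mono_left:
  assumes "mult_lattice m" and "x \<le> y"
  shows "m x a \<le> m y a"
  using mult_lattice_mono_right[OF assms, of a] by (simp add: mult_lattice_commute[OF assms(1)])

lemma mult_lattice_le_right:
  assumes "mult_lattice m"
  shows "m s x \<le> x"
proof -
  have "m s x \<le> m top x" by (rule mult_lattice_mono_left[OF assms top_greatest])
  also have "\<dots> = x"
    by (simp add: mult_lattice_commute[OF assms, of top] mult_lattice_top_right[OF assms])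
  finally show ?thesis .
qed

lemma compactly_generated_not_le:
  assumes "compactly_generated TYPE('a::complete_lattice)" and "\<not> a \<le> (b::'a)"
  obtains c where "compact_el c" and "c \<le> a" and "\<not> c \<le> b"
proof -
  have "a = Sup {c. compact_el c \<and> c \<le> a}"
    using assms(1) unfolding compactly_generated_def by blast
  then have "\<not> Sup {c. compact_el c \<and> c \<le> a} \<le> b" using assms(2) by simp
  then show ?thesis using that by (blast intro: Sup_least)
qed

lemma annihilated_sup:
  assumes "mult_lattice m" and "mult_closed m S"
    and "s \<in> S" "m s x \<le> a" and "t \<in> S" "m t y \<le> a"
  shows "\<exists>u\<in>S. m u (sup x y) \<le> a"
proof
  have "m (m s t) x \<le> m s x"
    using mult_lattice_le_right[OF assms(1), of t "m s x"]
    by (simp add: mult_lattice_commute[OF assms(1), of s t] mult_lattice_assoc[OF assms(1)])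
  moreover have "m (m s t) y \<le> m t y"
    using mult_lattice_le_right[OF assms(1), of s "m t y"] by (simp add: mult_lattice_assoc[OF assms(1)])
  ultimately show "m (m s t) (sup x y) \<le> a"
    using assms(4,6) by (simp add: mult_lattice_sup[OF assms(1)]) (meson order_trans)
  show "m s t \<in> S" using assms(2,3,5) unfolding mult_closed_def by blast
qed

lemma annihilated_Sup_finite:
  assumes "mult_lattice m" and "mult_closed m S"
    and "finite F" and "\<forall>x\<in>F. \<exists>s\<in>S. m s x \<le> a"
  shows "\<exists>s\<in>S. m s (Sup F) \<le> a"
  using assms(3,4)
proof (induction F rule: finite_induct)
  case empty
  obtain s where "s \<in> S" using assms(2) unfolding mult_closed_def by blast
  then show ?case by (auto simp: mult_lattice_bot[OF assms(1)])
next
  case (insert x F)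
  then obtain s t where "s \<in> S" "m s x \<le> a" "t \<in> S" "m t (Sup F) \<le> a" by auto
  then show ?case using annihilated_sup[OF assms(1,2)] by simp
qed

lemma compact_le_saturation_iff:
  assumes "mult_lattice m" and "mult_closed m S" and "compact_el c"
  shows "c \<le> saturation m S a \<longleftrightarrow> (\<exists>s\<in>S. m s c \<le> a)"
proof
  assume "c \<le> saturation m S a"
  then obtain F where F: "F \<subseteq> {x. \<exists>s\<in>S. m s x \<le> a}" "finite F" "c \<le> Sup F"
    using assms(3) unfolding compact_el_def saturation_def by blast
  then obtain s where "s \<in> S" "m s (Sup F) \<le> a"
    using annihilated_Sup_finite[OF assms(1,2)] by blast
  then show "\<exists>s\<in>S. m s c \<le> a"
    using mult_lattice_mono_right[OF assms(1) F(3)] order_trans by blast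
next
  assume "\<exists>s\<in>S. m s c \<le> a"
  then show "c \<le> saturation m S a" unfolding saturation_def by (simp add: Sup_upper)
qed

lemma saturation_neq_top:
  assumes "c_lattice m" and "mult_closed m S" and "\<forall>t\<in>S. \<not> t \<le> p"
  shows "saturation m S p \<noteq> top"
proof
  have ml: "mult_lattice m" and compact_top: "compact_el (top::'a)"
    using assms(1) unfolding c_lattice_def by blast+
  assume "saturation m S p = top"
  then obtain s where "s \<in> S" "m s top \<le> p"
    using compact_le_saturation_iff[OF ml assms(2) compact_top, of p] by auto
  then show False using assms(3) by (simp add: mult_lattice_top_right[OF ml])
qed

lemma saturation_S_prime_mult_le:
  assumes "c_lattice m" and "mult_closed m S" and "S_prime m S p"
    and "m a b \<le> saturation m S p"
  shows "a \<le> saturation m S p \<or> b \<le> saturation m S p"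
proof (rule ccontr)
  let ?P = "saturation m S p"
  have ml: "mult_lattice m" and cg: "compactly_generated TYPE('a)"
    and compact_mult: "\<And>a b. compact_el a \<Longrightarrow> compact_el b \<Longrightarrow> compact_el (m a b)"
    using assms(1) unfolding c_lattice_def by blast+
  note assoc = mult_lattice_assoc[OF ml]
  note compact_le = compact_le_saturation_iff[OF ml assms(2)]
  obtain s0 where s0: "s0 \<in> S" "\<And>a b. m a b \<le> p \<Longrightarrow> m s0 a \<le> p \<or> m s0 b \<le> p"
    using assms(3) unfolding S_prime_def by blast
  assume "\<not> (a \<le> ?P \<or> b \<le> ?P)"
  then have "\<not> a \<le> ?P" and "\<not> b \<le> ?P" by simp_all
  obtain x where x: "compact_el x" "x \<le> a" "\<not> x \<le> ?P"
    by (rule compactly_generated_not_le[OF cg \<open>\<not> a \<le> ?P\<close>])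
  obtain y where y: "compact_el y" "y \<le> b" "\<not> y \<le> ?P"
    by (rule compactly_generated_not_le[OF cg \<open>\<not> b \<le> ?P\<close>])
  have "m x y \<le> m a b"
    using mult_lattice_mono_left[OF ml x(2)] mult_lattice_mono_right[OF ml y(2)] by (rule order_trans)
  then have "m x y \<le> ?P" using assms(4) by simp
  then obtain u where u: "u \<in> S" "m u (m x y) \<le> p"
    using compact_le[OF compact_mult[OF x(1) y(1)]] by blast
  then have "m s0 (m u x) \<le> p \<or> m s0 y \<le> p"
    using s0(2)[of "m u x" y] by (simp add: assoc)
  then consider "m (m s0 u) x \<le> p" | "m s0 y \<le> p"
    by (auto simp: assoc)
  then show False
  proof cases
    case 1
    moreover have "m s0 u \<in> S" using assms(2) s0(1) u(1) unfolding mult_closed_def by blast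
    ultimately show False using compact_le x by blast
  next
    case 2
    then show False using compact_le s0(1) y by blast
  qed
qed

theorem mainTheorem12:
  fixes m :: "'a::complete_lattice \<Rightarrow> 'a \<Rightarrow> 'a" and S :: "'a set" and p :: 'a
  assumes "c_lattice m"
    and "mult_closed m S"
    and "top \<in> S" and "bot \<notin> S"
    and "S_prime m S p"
  shows "prime_el m (saturation m S p)"
proof -
  have "\<forall>t\<in>S. \<not> t \<le> p" using assms(5) unfolding S_prime_def by blast
  then have "saturation m S p \<noteq> top"
    using saturation_neq_top[OF assms(1,2)] by blast
  then show ?thesis
    unfolding prime_el_def using saturation_S_prime_mult_le[OF assms(1,2,5)] by blast
qed

end
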